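(* There exists a $(39,3)$-arc in $\operatorname{PG}(2,25)$; hence $m_3(2,25)\ge 39$.
   Context: Points of $\operatorname{PG}(2,q)$ are the 1-dimensional subspaces of $\operatorname{GF}(q)^3$, lines are the 2-dimensional subspaces. An $(n,r)$-arc in $\operatorname{PG}(2,q)$ is a set $\mathcal B$ of $n$ points such that every line contains at most $r$ points of $\mathcal B$ and at least one line contains exactly $r$ points of $\mathcal B$. $m_r(2,q)$ is the maximum $n$ for which an $(n,r)$-arc in $\operatorname{PG}(2,q)$ exists. *)

theory Defs
  imports Main
begin

type_synonym 'a vec3 = "'a \<times> 'a \<times> 'a"

definition zero3 :: "'a::field vec3" where
  "zero3 = (0, 0, 0)"

definition smult3 :: "'a::field \<Rightarrow> 'a vec3 \<Rightarrow> 'a vec3" where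
  "smult3 c v = (case v of (x, y, z) \<Rightarrow> (c * x, c * y, c * z))"

definition add3 :: "'a::field vec3 \<Rightarrow> 'a vec3 \<Rightarrow> 'a vec3" where
  "add3 u v = (case u of (x, y, z) \<Rightarrow> case v of (x', y', z') \<Rightarrow> (x + x', y + y', z + z'))"

definition span1 :: "'a::field vec3 \<Rightarrow> 'a vec3 set" where
  "span1 v = {smult3 c v | c. True}"

definition span2 :: "'a::field vec3 \<Rightarrow> 'a vec3 \<Rightarrow> 'a vec3 set" where
  "span2 u w = {add3 (smult3 a u) (smult3 b w) | a b. True}"

definition pg_points :: "'a::field vec3 set set" where
  "pg_points = {span1 v | v. v \<noteq> zero3}"

definition pg_lines :: "'a::field vec3 set set" where
  "pg_lines = {span2 u w | u w. u \<noteq> zero3 \<and> w \<notin> span1 u}"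

definition is_arc :: "nat \<Rightarrow> nat \<Rightarrow> 'a::field vec3 set set \<Rightarrow> bool" where
  "is_arc n r B \<longleftrightarrow> B \<subseteq> pg_points \<and> finite B \<and> card B = n
     \<and> (\<forall>L\<in>pg_lines. card {P\<in>B. P \<subseteq> L} \<le> r)
     \<and> (\<exists>L\<in>pg_lines. card {P\<in>B. P \<subseteq> L} = r)"

definition arc_max :: "nat \<Rightarrow> 'a::field itself \<Rightarrow> nat" where
  "arc_max r _ = Sup {n. \<exists>B :: 'a vec3 set set. is_arc n r B}"

end

theory Submission
  imports Defs "HOL-Number_Theory.Number_Theory"
begin

text \<open>Any field \<open>F\<close> with 25 elements has characteristic 5 and contains a square root \<open>w\<close>
  of the non-square 2 of the prime field, so every element of \<open>F\<close> is uniquely \<open>a + b w\<close> with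
  \<open>a, b \<in> {0..4}\<close>. In these coordinates the 39 points \<open>(1 : y : z)\<close> of the arc are listed
  explicitly. Every line has a normal vector of the form \<open>(1, a, b)\<close>, \<open>(0, 1, b)\<close> or
  \<open>(0, 0, 1)\<close>; running through these 651 normal vectors with arithmetic in the coordinates
  shows that no line contains more than three of the points, and an explicit linear
  dependence exhibits a line containing three.\<close>

lemma CHAR_eq_if_card_eq_prime_power:
  assumes "card (UNIV :: 'a::{field,finite} set) = p ^ n" and "prime p" and "n > 0"
  shows "CHAR('a) = p"
proof -
  have "prime CHAR('a)"
    by (rule prime_CHAR_semidom) (simp add: finite_imp_CHAR_pos)
  moreover have "CHAR('a) dvd p ^ n"
    using CHAR_dvd_CARD[where 'a='a] assms(1) by simp
  ultimately show ?thesis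
    using assms(2) prime_dvd_power primes_dvd_imp_eq by blast
qed

lemma of_nat_eq_iff_mod_CHAR:
  "(of_nat m :: 'a::semiring_1_cancel) = of_nat n \<longleftrightarrow> m mod CHAR('a) = n mod CHAR('a)"
  by (simp add: of_nat_eq_iff_cong_CHAR cong_def)

lemma of_nat_power_CHAR_minus_1:
  assumes "prime CHAR('a::semiring_1_cancel)" and "\<not> CHAR('a) dvd t"
  shows "(of_nat t :: 'a) ^ (CHAR('a) - 1) = 1"
proof -
  have "[t ^ (CHAR('a) - 1) = 1] (mod CHAR('a))"
    using fermat_theorem[OF assms] .
  then show ?thesis
    unfolding of_nat_eq_iff_cong_CHAR[symmetric] by simp
qed

lemma range_of_nat_CHAR:
  assumes "CHAR('a::semiring_1_cancel) > 0"
  shows "range (of_nat :: nat \<Rightarrow> 'a) = of_nat ` {..<CHAR('a)}"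
proof -
  have "(of_nat n :: 'a) \<in> of_nat ` {..<CHAR('a)}" for n
  proof (rule image_eqI)
    show "(of_nat n :: 'a) = of_nat (n mod CHAR('a))"
      by (simp add: of_nat_eq_iff_mod_CHAR)
  qed (simp add: assms)
  then show ?thesis
    by auto
qed

lemma not_dvd_if_between_multiples:
  fixes p t :: nat
  assumes "0 < t" and "t < 2 * p" and "t \<noteq> p"
  shows "\<not> p dvd t"
proof
  assume "p dvd t"
  then obtain k where k: "t = p * k" ..
  then have "0 < k" "k < 2"
    using assms(1,2) by (auto simp: mult_less_cancel1)
  then show False
    using k assms(3) by simp
qed

definition coord :: "'a::semiring_1 \<Rightarrow> nat \<times> nat \<Rightarrow> 'a" where
  "coord w c = of_nat (fst c) + of_nat (snd c) * w"

lemma inj_on_coord: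
  fixes w :: "'a::field"
  assumes prime: "prime CHAR('a)" and w: "w \<notin> range of_nat"
  shows "inj_on (coord w) ({..<CHAR('a)} \<times> {..<CHAR('a)})"
proof (rule inj_onI, clarify)
  let ?p = "CHAR('a)"
  fix a b c d
  assume lt: "a < ?p" "b < ?p" "c < ?p" "d < ?p"
    and eq: "coord w (a, b) = coord w (c, d)"
  show "a = c \<and> b = d"
  proof (cases "b = d")
    case True
    then have "(of_nat a :: 'a) = of_nat c"
      using eq by (simp add: coord_def)
    then show ?thesis
      using True lt by (simp add: of_nat_eq_iff_mod_CHAR)
  next
    case False
    define t where "t = b + ?p - d"
    have t: "\<not> ?p dvd t"
      using False lt unfolding t_def by (intro not_dvd_if_between_multiples) auto
    have "of_nat t * w = (of_nat b - of_nat d) * w"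
      using lt unfolding t_def by (simp add: of_nat_diff)
    also have "\<dots> = of_nat (c + ?p) - of_nat a"
      using eq by (simp add: coord_def algebra_simps)
    also have "\<dots> = of_nat (c + ?p - a)"
      using lt by (simp add: of_nat_diff)
    finally have tw: "of_nat t * w = of_nat (c + ?p - a)" .
    obtain m where m: "?p = Suc (Suc m)"
      using prime prime_ge_2_nat by (metis add_2_eq_Suc le_Suc_ex)
    \<comment> \<open>Fermat's little theorem inverts \<open>of_nat t\<close> inside the prime field.\<close>
    have "w = of_nat t ^ (?p - 1) * w"
      using of_nat_power_CHAR_minus_1[OF prime t] by simp
    also have "\<dots> = of_nat (t ^ m) * (of_nat t * w)"
      by (simp add: m)
    also have "\<dots> = of_nat (t ^ m * (c + ?p - a))"
      by (simp add: tw)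
    finally show ?thesis
      using w by blast
  qed
qed

lemma coord_surj:
  fixes w :: "'a::{field,finite}"
  assumes "prime CHAR('a)" and "card (UNIV :: 'a set) = CHAR('a) ^ 2"
    and "w \<notin> range of_nat"
  shows "coord w ` ({..<CHAR('a)} \<times> {..<CHAR('a)}) = UNIV"
proof -
  have "card (coord w ` ({..<CHAR('a)} \<times> {..<CHAR('a)})) = CHAR('a) ^ 2"
    using card_image[OF inj_on_coord[OF assms(1,3)]] by (simp add: power2_eq_square)
  then show ?thesis
    using assms(2) by (intro card_subset_eq) auto
qed

lemma square_mod_5: "(k * k) mod 5 \<in> {0, 1, 4 :: nat}"
proof -
  have "k mod 5 \<in> {0, 1, 2, 3, 4}"
    by auto
  then have "(k mod 5) * (k mod 5) mod 5 \<in> {0, 1, 4}"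
    by auto
  then show ?thesis
    by (simp add: mod_mult_eq)
qed

lemma in_range_of_nat_iff_square_mod_5:
  fixes u :: "'a::field"
  assumes "CHAR('a) = 5" and "u * u = of_nat r"
  shows "u \<in> range of_nat \<longleftrightarrow> r mod 5 \<in> {0, 1, 4}"
proof
  assume "u \<in> range of_nat"
  then obtain k where "u = of_nat k"
    by blast
  then have "(of_nat (k * k) :: 'a) = of_nat r"
    using assms(2) by simp
  then have "r mod 5 = (k * k) mod 5"
    by (metis assms(1) of_nat_eq_iff_mod_CHAR)
  then show "r mod 5 \<in> {0, 1, 4}"
    using square_mod_5 by simp
next
  assume "r mod 5 \<in> {0, 1, 4}"
  moreover have "(0 * 0) mod 5 = (0 :: nat)" "(1 * 1) mod 5 = (1 :: nat)" "(2 * 2) mod 5 = (4 :: nat)"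
    by simp_all
  ultimately obtain k :: nat where "r mod 5 = (k * k) mod 5"
    by (metis insertE empty_iff)
  then have "u * u = of_nat k * of_nat k"
    using assms by (simp add: of_nat_eq_iff_mod_CHAR flip: of_nat_mult)
  then have "(u - of_nat k) * (u + of_nat k) = 0"
    by (simp add: algebra_simps)
  then have "u = of_nat k \<or> u = - of_nat k"
    by (simp add: eq_neg_iff_add_eq_0)
  moreover have "- (of_nat k :: 'a) = of_nat (4 * k)"
  proof -
    have "(5 :: 'a) = 0"
      using of_nat_CHAR[where 'a='a] assms(1) by simp
    then show ?thesis
      by (simp add: eq_neg_iff_add_eq_0 algebra_simps)
  qed
  ultimately show "u \<in> range of_nat"
    by (metis rangeI)
qed

lemma ex_not_of_nat_with_square_of_nat:
  assumes card: "card (UNIV :: 'a::{field,finite} set) = 25"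
  shows "\<exists>(u :: 'a) r. u \<notin> range of_nat \<and> u * u = of_nat r"
proof -
  have char: "CHAR('a) = 5"
    using CHAR_eq_if_card_eq_prime_power[of 5 2] card by simp
  have five: "(5 :: 'a) = 0"
    using of_nat_CHAR[where 'a='a] char by simp
  have "card (range (of_nat :: nat \<Rightarrow> 'a)) \<le> 5"
    using range_of_nat_CHAR[where 'a='a] char card_image_le[of "{..<5::nat}"] by simp
  then have "range (of_nat :: nat \<Rightarrow> 'a) \<noteq> UNIV"
    using card by auto
  then obtain v :: 'a where v: "v \<notin> range of_nat"
    by blast
  have "v * v \<in> coord v ` ({..<5} \<times> {..<5})"
    using coord_surj[of v] v card char by simp
  then obtain a b where vv: "v * v = of_nat a + of_nat b * v"
    by (auto simp: coord_def)
  \<comment> \<open>Completing the square: \<open>u = v + 2 b\<close> has \<open>u\<^sup>2 = a + 4 b\<^sup>2 + 5 b v\<close>.\<close>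
  define u where "u = v + of_nat (2 * b)"
  have "u * u = of_nat (a + 4 * b * b) + 5 * (of_nat b * v)"
    unfolding u_def using vv by (simp add: algebra_simps)
  then have uu: "u * u = of_nat (a + 4 * b * b)"
    using five by simp
  have "u \<notin> range of_nat"
  proof
    assume "u \<in> range of_nat"
    then obtain k where "u = of_nat k"
      by blast
    then have "of_nat (k + 3 * b) - v = 5 * of_nat b"
      by (simp add: u_def algebra_simps)
    then have "v = of_nat (k + 3 * b)"
      using five by simp
    then show False
      using v by blast
  qed
  with uu show ?thesis
    by blast
qed

lemma ex_sqrt_2_if_card_25:
  assumes card: "card (UNIV :: 'a::{field,finite} set) = 25"
  shows "\<exists>w :: 'a. w * w = 2"
proof -
  have char: "CHAR('a) = 5"
    using CHAR_eq_if_card_eq_prime_power[of 5 2] card by simp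
  obtain u :: 'a and r where u: "u \<notin> range of_nat" and uu: "u * u = of_nat r"
    using ex_not_of_nat_with_square_of_nat[OF card] by blast
  then have "r mod 5 \<notin> {0, 1, 4}"
    using in_range_of_nat_iff_square_mod_5[OF char uu] by simp
  then have "r mod 5 = 2 \<or> r mod 5 = 3"
    by auto
  then show ?thesis
  proof
    assume "r mod 5 = 2"
    then have "(of_nat r :: 'a) = of_nat 2"
      unfolding of_nat_eq_iff_mod_CHAR char by simp
    then show ?thesis
      using uu by auto
  next
    assume "r mod 5 = 3"
    then have "(4 * r) mod 5 = 2"
      by presburger
    then have "(of_nat (4 * r) :: 'a) = of_nat 2"
      unfolding of_nat_eq_iff_mod_CHAR char by simp
    have "(2 * u) * (2 * u) = 4 * (u * u)"
      by (simp add: algebra_simps)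
    also have "\<dots> = of_nat (4 * r)"
      by (simp add: uu)
    also have "\<dots> = 2"
      using \<open>of_nat (4 * r) = of_nat 2\<close> by simp
    finally show ?thesis
      by blast
  qed
qed

definition dot3 :: "'a::field vec3 \<Rightarrow> 'a vec3 \<Rightarrow> 'a" where
  "dot3 u v = (case u of (a, b, c) \<Rightarrow> case v of (x, y, z) \<Rightarrow> a * x + b * y + c * z)"

definition cross3 :: "'a::field vec3 \<Rightarrow> 'a vec3 \<Rightarrow> 'a vec3" where
  "cross3 u v = (case u of (a, b, c) \<Rightarrow> case v of (x, y, z) \<Rightarrow>
     (b * z - c * y, c * x - a * z, a * y - b * x))"

lemma dot3_cross3_eq_0_if_in_span2:
  fixes u w v :: "'a::field vec3"
  assumes "v \<in> span2 u w"
  shows "dot3 (cross3 u w) v = 0"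
proof -
  obtain a b where "v = add3 (smult3 a u) (smult3 b w)"
    using assms by (auto simp: span2_def)
  then show ?thesis
    by (cases u, cases w) (simp add: dot3_def cross3_def add3_def smult3_def algebra_simps)
qed

lemma in_span1_self: "v \<in> span1 (v :: 'a::field vec3)"
proof -
  have "v = smult3 1 v"
    by (cases v) (simp add: smult3_def)
  then show ?thesis
    unfolding span1_def by blast
qed

lemma cross3_neq_zero3:
  fixes u w :: "'a::field vec3"
  assumes u: "u \<noteq> zero3" and w: "w \<notin> span1 u"
  shows "cross3 u w \<noteq> zero3"
proof
  assume c: "cross3 u w = zero3"
  obtain u1 u2 u3 where u_eq: "u = (u1, u2, u3)"
    by (cases u) auto
  obtain w1 w2 w3 where w_eq: "w = (w1, w2, w3)"
    by (cases w) auto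
  have e: "u2 * w3 = u3 * w2" "u3 * w1 = u1 * w3" "u1 * w2 = u2 * w1"
    using c unfolding u_eq w_eq by (simp_all add: cross3_def zero3_def)
  \<comment> \<open>Vanishing \<open>2 \<times> 2\<close> minors make \<open>w\<close> the multiple of \<open>u\<close> read off at a nonzero coordinate.\<close>
  have "w = smult3 (w1 / u1) u \<or> w = smult3 (w2 / u2) u \<or> w = smult3 (w3 / u3) u"
  proof (cases "u1 = 0")
    case False
    then show ?thesis
      using e by (simp add: u_eq w_eq smult3_def field_simps)
  next
    case u1: True
    show ?thesis
    proof (cases "u2 = 0")
      case False
      then show ?thesis
        using u1 e by (simp add: u_eq w_eq smult3_def field_simps)
    next
      case True
      then have "u3 \<noteq> 0"
        using u1 u unfolding u_eq by (simp add: zero3_def)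
      then show ?thesis
        using u1 True e by (simp add: u_eq w_eq smult3_def field_simps)
    qed
  qed
  then show False
    using w unfolding span1_def by blast
qed

definition normal_vectors :: "'a::field vec3 set" where
  "normal_vectors = {(1, a, b) | a b. True} \<union> {(0, 1, b) | b. True} \<union> {(0, 0, 1)}"

lemma ex_normal_vector_smult3:
  fixes n :: "'a::field vec3"
  assumes "n \<noteq> zero3"
  shows "\<exists>k m. k \<noteq> 0 \<and> m \<in> normal_vectors \<and> n = smult3 k m"
proof -
  obtain n1 n2 n3 where n: "n = (n1, n2, n3)"
    by (cases n) auto
  show ?thesis
  proof (cases "n1 = 0")
    case False
    then have "n = smult3 n1 (1, n2 / n1, n3 / n1)"
      by (simp add: n smult3_def)
    with False show ?thesis
      unfolding normal_vectors_def by blast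
  next
    case n1: True
    show ?thesis
    proof (cases "n2 = 0")
      case False
      then have "n = smult3 n2 (0, 1, n3 / n2)"
        using n1 by (simp add: n smult3_def)
      with False show ?thesis
        unfolding normal_vectors_def by blast
    next
      case True
      then have "n3 \<noteq> 0" "n = smult3 n3 (0, 0, 1)"
        using n1 assms by (simp_all add: n smult3_def zero3_def)
      then show ?thesis
        unfolding normal_vectors_def by blast
    qed
  qed
qed

lemma dot3_smult3: "dot3 (smult3 k n) v = k * dot3 n (v :: 'a::field vec3)"
  by (cases n, cases v) (simp add: dot3_def smult3_def algebra_simps)

lemma pg_line_has_normal_vector:
  fixes L :: "'a::field vec3 set"
  assumes "L \<in> pg_lines"
  shows "\<exists>n\<in>normal_vectors. \<forall>v\<in>L. dot3 n v = 0"
proof -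
  obtain u w where L: "L = span2 u w" and "u \<noteq> zero3" "w \<notin> span1 u"
    using assms by (auto simp: pg_lines_def)
  from \<open>u \<noteq> zero3\<close> \<open>w \<notin> span1 u\<close> have "cross3 u w \<noteq> zero3"
    by (rule cross3_neq_zero3)
  then obtain k n where "k \<noteq> 0" "n \<in> normal_vectors" "cross3 u w = smult3 k n"
    using ex_normal_vector_smult3 by blast
  moreover have "\<forall>v\<in>L. dot3 (cross3 u w) v = 0"
    unfolding L using dot3_cross3_eq_0_if_in_span2 by blast
  ultimately show ?thesis
    by (auto simp: dot3_smult3)
qed

lemma in_span2_left: "u \<in> span2 u (w :: 'a::field vec3)"
proof -
  have "u = add3 (smult3 1 u) (smult3 0 w)"
    by (cases u, cases w) (simp add: add3_def smult3_def)
  then show ?thesis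
    unfolding span2_def by blast
qed

lemma in_span2_right: "w \<in> span2 u (w :: 'a::field vec3)"
proof -
  have "w = add3 (smult3 0 u) (smult3 1 w)"
    by (cases u, cases w) (simp add: add3_def smult3_def)
  then show ?thesis
    unfolding span2_def by blast
qed

lemma span1_subset_span2:
  fixes u w v :: "'a::field vec3"
  assumes "v \<in> span2 u w"
  shows "span1 v \<subseteq> span2 u w"
proof
  fix x
  assume "x \<in> span1 v"
  then obtain c where x: "x = smult3 c v"
    by (auto simp: span1_def)
  obtain a b where "v = add3 (smult3 a u) (smult3 b w)"
    using assms by (auto simp: span2_def)
  then have "x = add3 (smult3 (c * a) u) (smult3 (c * b) w)"
    unfolding x by (cases u, cases w) (simp add: add3_def smult3_def algebra_simps)
  then show "x \<in> span2 u w"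
    unfolding span2_def by blast
qed

lemma in_span1_affine_iff:
  fixes y z y' z' :: "'a::field"
  shows "(1, y', z') \<in> span1 (1, y, z) \<longleftrightarrow> y' = y \<and> z' = z"
  by (auto simp: span1_def smult3_def intro: exI[of _ 1])

text \<open>A code \<open>(a, b)\<close> stands for \<open>a + b w\<close> with \<open>w\<^sup>2 = 2\<close>; the arithmetic is done in \<open>\<nat>\<close>
  and reduction modulo 5 is deferred to \<open>gf25_is_zero\<close>.\<close>

type_synonym gf25_code = "nat \<times> nat"

fun gf25_add :: "gf25_code \<Rightarrow> gf25_code \<Rightarrow> gf25_code" where
  "gf25_add (a, b) (c, d) = (a + c, b + d)"

fun gf25_mul :: "gf25_code \<Rightarrow> gf25_code \<Rightarrow> gf25_code" where
  "gf25_mul (a, b) (c, d) = (a * c + 2 * (b * d), a * d + b * c)"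

fun gf25_is_zero :: "gf25_code \<Rightarrow> bool" where
  "gf25_is_zero (a, b) \<longleftrightarrow> a mod 5 = 0 \<and> b mod 5 = 0"

definition gf25_codes :: "gf25_code list" where
  "gf25_codes = List.product [0..<5] [0..<5]"

definition line_codes :: "(gf25_code \<times> gf25_code \<times> gf25_code) list" where
  "line_codes =
     [((1, 0), a, b). a \<leftarrow> gf25_codes, b \<leftarrow> gf25_codes] @
     [((0, 0), (1, 0), b). b \<leftarrow> gf25_codes] @ [((0, 0), (0, 0), (1, 0))]"

fun gf25_line_value :: "gf25_code \<times> gf25_code \<times> gf25_code \<Rightarrow> gf25_code \<times> gf25_code \<Rightarrow> gf25_code" where
  "gf25_line_value (a, b, c) (y, z) = gf25_add (gf25_add a (gf25_mul b y)) (gf25_mul c z)"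

definition arc_codes :: "(gf25_code \<times> gf25_code) list" where
  "arc_codes = [((0,2),(2,3)), ((0,4),(1,0)), ((2,0),(0,3)), ((1,0),(1,2)), ((4,1),(4,3)),
    ((3,1),(3,3)), ((0,4),(0,3)), ((4,3),(1,0)), ((2,2),(0,1)), ((0,0),(3,0)), ((1,3),(1,4)),
    ((4,4),(0,2)), ((0,1),(3,0)), ((2,0),(3,3)), ((1,0),(0,0)), ((0,0),(0,4)), ((3,3),(3,1)),
    ((1,2),(0,0)), ((0,1),(0,1)), ((4,4),(1,2)), ((2,0),(3,4)), ((1,3),(2,0)), ((4,1),(4,0)),
    ((1,4),(0,1)), ((0,3),(2,2)), ((1,1),(2,0)), ((1,1),(4,3)), ((1,1),(4,0)), ((1,2),(1,0)),
    ((1,4),(1,4)), ((3,4),(0,4)), ((0,0),(1,2)), ((0,3),(0,3)), ((1,3),(2,2)), ((0,1),(2,0)),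
    ((4,3),(0,0)), ((4,4),(1,4)), ((0,4),(3,1)), ((4,1),(1,1))]"

lemma line_codes_meet_arc_codes_at_most_3:
  "\<forall>n\<in>set line_codes. length (filter (\<lambda>p. gf25_is_zero (gf25_line_value n p)) arc_codes) \<le> 3"
  by code_simp

lemma arc_codes_subset: "set arc_codes \<subseteq> set gf25_codes \<times> set gf25_codes"
  by (simp add: arc_codes_def gf25_codes_def)

lemma distinct_arc_codes: "distinct arc_codes" and length_arc_codes: "length arc_codes = 39"
  by (simp_all add: arc_codes_def)

lemma set_gf25_codes: "set gf25_codes = {..<5} \<times> {..<5}"
  by (auto simp: gf25_codes_def)

locale gf25 =
  fixes w :: "'a::{field,finite}"
  assumes card_UNIV: "card (UNIV :: 'a set) = 25" and w_square: "w * w = 2"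
begin

lemma CHAR: "CHAR('a) = 5"
  using CHAR_eq_if_card_eq_prime_power[of 5 2] card_UNIV by simp

lemma w_not_of_nat: "w \<notin> range of_nat"
  using in_range_of_nat_iff_square_mod_5[OF CHAR, of w 2] w_square by simp

lemma coord_gf25_add: "coord w (gf25_add x y) = coord w x + coord w y"
  by (cases x, cases y) (simp add: coord_def algebra_simps)

lemma coord_gf25_mul: "coord w (gf25_mul x y) = coord w x * coord w y"
proof (cases x, cases y)
  fix a b c d
  assume "x = (a, b)" "y = (c, d)"
  moreover have "(of_nat a + of_nat b * w) * (of_nat c + of_nat d * w) =
      of_nat a * of_nat c + of_nat b * of_nat d * (w * w) + (of_nat a * of_nat d + of_nat b * of_nat c) * w"
    by (simp add: algebra_simps)
  ultimately show ?thesis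
    by (simp add: coord_def w_square algebra_simps)
qed

lemma coord_eq_if_mod_eq:
  assumes "fst x mod 5 = fst y mod 5" and "snd x mod 5 = snd y mod 5"
  shows "coord w x = coord w y"
proof -
  have "(of_nat (fst x) :: 'a) = of_nat (fst y)" "(of_nat (snd x) :: 'a) = of_nat (snd y)"
    using assms by (simp_all add: of_nat_eq_iff_mod_CHAR CHAR)
  then show ?thesis
    by (simp add: coord_def)
qed

lemma coord_inj_on: "inj_on (coord w) (set gf25_codes)"
  using inj_on_coord[OF _ w_not_of_nat] CHAR by (simp add: set_gf25_codes)

lemma coord_eq_0_iff: "coord w x = 0 \<longleftrightarrow> gf25_is_zero x"
proof (cases x)
  case (Pair a b)
  have "coord w x = coord w (a mod 5, b mod 5)"
    using Pair by (intro coord_eq_if_mod_eq) simp_all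
  moreover have "coord w (a mod 5, b mod 5) = coord w (0, 0) \<longleftrightarrow> (a mod 5, b mod 5) = (0, 0)"
    using inj_on_eq_iff[OF coord_inj_on] by (simp add: set_gf25_codes)
  ultimately show ?thesis
    using Pair by (simp add: coord_def)
qed

lemma ex_gf25_code: "\<exists>c\<in>set gf25_codes. coord w c = x"
proof -
  have "x \<in> coord w ` set gf25_codes"
    using coord_surj[OF _ _ w_not_of_nat] CHAR card_UNIV by (simp add: set_gf25_codes)
  then show ?thesis
    by blast
qed

definition coord3 :: "gf25_code \<times> gf25_code \<times> gf25_code \<Rightarrow> 'a vec3" where
  "coord3 n = (case n of (a, b, c) \<Rightarrow> (coord w a, coord w b, coord w c))"

lemma normal_vectors_subset_coord3: "normal_vectors \<subseteq> coord3 ` set line_codes"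
proof
  fix n :: "'a vec3"
  have one: "coord w (1, 0) = 1" and zero: "coord w (0, 0) = 0"
    by (simp_all add: coord_def)
  assume "n \<in> normal_vectors"
  then consider a b where "n = (1, a, b)" | b where "n = (0, 1, b)" | "n = (0, 0, 1)"
    unfolding normal_vectors_def by blast
  then show "n \<in> coord3 ` set line_codes"
  proof cases
    case (1 a b)
    obtain a' b' where "a' \<in> set gf25_codes" "coord w a' = a" "b' \<in> set gf25_codes" "coord w b' = b"
      using ex_gf25_code by metis
    then have "((1, 0), a', b') \<in> set line_codes" "coord3 ((1, 0), a', b') = n"
      using 1 one by (auto simp: line_codes_def coord3_def)
    then show ?thesis
      by (metis image_eqI)
  next
    case (2 b)
    obtain b' where "b' \<in> set gf25_codes" "coord w b' = b"
      using ex_gf25_code by metis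
    then have "((0, 0), (1, 0), b') \<in> set line_codes" "coord3 ((0, 0), (1, 0), b') = n"
      using 2 one zero by (auto simp: line_codes_def coord3_def)
    then show ?thesis
      by (metis image_eqI)
  next
    case 3
    then have "((0, 0), (0, 0), (1, 0)) \<in> set line_codes" "coord3 ((0, 0), (0, 0), (1, 0)) = n"
      using one zero by (auto simp: line_codes_def coord3_def)
    then show ?thesis
      by (metis image_eqI)
  qed
qed

definition arc_vector :: "gf25_code \<times> gf25_code \<Rightarrow> 'a vec3" where
  "arc_vector p = (1, coord w (fst p), coord w (snd p))"

definition arc25 :: "'a vec3 set set" where
  "arc25 = (\<lambda>p. span1 (arc_vector p)) ` set arc_codes"

lemma dot3_coord3_arc_vector:
  "dot3 (coord3 n) (arc_vector p) = coord w (gf25_line_value n p)"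
proof -
  obtain a b c where "n = (a, b, c)"
    by (metis prod_cases3)
  moreover obtain y z where "p = (y, z)"
    by (cases p)
  ultimately show ?thesis
    by (simp add: dot3_def coord3_def arc_vector_def coord_gf25_add coord_gf25_mul)
qed

lemma arc_vector_in_span1_iff:
  assumes "p \<in> set arc_codes" and "q \<in> set arc_codes"
  shows "arc_vector q \<in> span1 (arc_vector p) \<longleftrightarrow> q = p"
proof -
  have "fst p \<in> set gf25_codes" "snd p \<in> set gf25_codes"
    "fst q \<in> set gf25_codes" "snd q \<in> set gf25_codes"
    using assms arc_codes_subset by auto
  then show ?thesis
    unfolding arc_vector_def in_span1_affine_iff
    by (simp add: inj_on_eq_iff[OF coord_inj_on] prod_eq_iff)
qed

lemma inj_on_span1_arc_vector: "inj_on (\<lambda>p. span1 (arc_vector p)) (set arc_codes)"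
proof (rule inj_onI)
  fix p q
  assume pq: "p \<in> set arc_codes" "q \<in> set arc_codes"
    and "span1 (arc_vector p) = span1 (arc_vector q)"
  then have "arc_vector q \<in> span1 (arc_vector p)"
    using in_span1_self[of "arc_vector q"] by simp
  then show "p = q"
    using arc_vector_in_span1_iff[OF pq] by simp
qed

lemma card_arc25: "card arc25 = 39"
  using card_image[OF inj_on_span1_arc_vector] distinct_card[OF distinct_arc_codes] length_arc_codes
  by (simp add: arc25_def)

lemma card_arc25_on_line_le_3:
  assumes "L \<in> pg_lines"
  shows "card {P \<in> arc25. P \<subseteq> L} \<le> 3"
proof -
  obtain n where "n \<in> set line_codes" and n: "\<forall>v\<in>L. dot3 (coord3 n) v = 0"
    using pg_line_has_normal_vector[OF assms] normal_vectors_subset_coord3 by blast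
  define S where "S = {p \<in> set arc_codes. gf25_is_zero (gf25_line_value n p)}"
  have "{P \<in> arc25. P \<subseteq> L} \<subseteq> (\<lambda>p. span1 (arc_vector p)) ` S"
  proof
    fix P
    assume "P \<in> {P \<in> arc25. P \<subseteq> L}"
    then obtain p where p: "p \<in> set arc_codes" and P: "P = span1 (arc_vector p)" and "P \<subseteq> L"
      by (auto simp: arc25_def)
    then have "arc_vector p \<in> L"
      using in_span1_self by blast
    then have "dot3 (coord3 n) (arc_vector p) = 0"
      using n by blast
    then have "gf25_is_zero (gf25_line_value n p)"
      by (simp add: dot3_coord3_arc_vector coord_eq_0_iff)
    then show "P \<in> (\<lambda>p. span1 (arc_vector p)) ` S"
      using p P unfolding S_def by blast
  qed
  then have "card {P \<in> arc25. P \<subseteq> L} \<le> card ((\<lambda>p. span1 (arc_vector p)) ` S)"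
    by (intro card_mono) (simp_all add: S_def)
  also have "\<dots> \<le> card S"
    by (rule card_image_le) (simp add: S_def)
  also have "card S \<le> length (filter (\<lambda>p. gf25_is_zero (gf25_line_value n p)) arc_codes)"
    using card_length by (simp add: S_def flip: set_filter)
  also have "\<dots> \<le> 3"
    using line_codes_meet_arc_codes_at_most_3 \<open>n \<in> set line_codes\<close> by blast
  finally show ?thesis .
qed


lemma arc_vector_in_span2:
  "arc_vector ((2, 0), (0, 3)) \<in> span2 (arc_vector ((0, 2), (2, 3))) (arc_vector ((0, 4), (1, 0)))"
proof -
  have "coord w (2, 2) + coord w (4, 3) = coord w (1, 0)"
    "coord w (2, 2) * coord w (0, 2) + coord w (4, 3) * coord w (0, 4) = coord w (2, 0)"
    "coord w (2, 2) * coord w (2, 3) + coord w (4, 3) * coord w (1, 0) = coord w (0, 3)"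
    by (simp_all only: coord_gf25_add[symmetric] coord_gf25_mul[symmetric])
      (rule coord_eq_if_mod_eq; simp)+
  then have "arc_vector ((2, 0), (0, 3)) =
      add3 (smult3 (coord w (2, 2)) (arc_vector ((0, 2), (2, 3))))
        (smult3 (coord w (4, 3)) (arc_vector ((0, 4), (1, 0))))"
    by (simp add: arc_vector_def add3_def smult3_def coord_def)
  then show ?thesis
    unfolding span2_def by blast
qed

lemma ex_line_card_arc25_eq_3: "\<exists>L\<in>pg_lines. card {P \<in> arc25. P \<subseteq> L} = 3"
proof -
  define p0 p1 p2 :: "gf25_code \<times> gf25_code"
    where "p0 = ((0, 2), (2, 3))" and "p1 = ((0, 4), (1, 0))" and "p2 = ((2, 0), (0, 3))"
  have mem: "p0 \<in> set arc_codes" "p1 \<in> set arc_codes" "p2 \<in> set arc_codes"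
    by (simp_all add: p0_def p1_def p2_def arc_codes_def)
  define L where "L = span2 (arc_vector p0) (arc_vector p1)"
  have "arc_vector p0 \<noteq> zero3"
    by (simp add: arc_vector_def zero3_def)
  moreover have "arc_vector p1 \<notin> span1 (arc_vector p0)"
    using arc_vector_in_span1_iff mem by (simp add: p0_def p1_def)
  ultimately have L: "L \<in> pg_lines"
    unfolding L_def pg_lines_def by blast
  have "arc_vector p0 \<in> L" "arc_vector p1 \<in> L"
    unfolding L_def by (rule in_span2_left, rule in_span2_right)
  moreover have "arc_vector p2 \<in> L"
    using arc_vector_in_span2 unfolding L_def p0_def p1_def p2_def .
  ultimately have "span1 (arc_vector p0) \<subseteq> L" "span1 (arc_vector p1) \<subseteq> L"
    "span1 (arc_vector p2) \<subseteq> L"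
    unfolding L_def by (simp_all add: span1_subset_span2)
  then have sub: "{span1 (arc_vector p0), span1 (arc_vector p1), span1 (arc_vector p2)}
      \<subseteq> {P \<in> arc25. P \<subseteq> L}"
    using mem unfolding arc25_def by blast
  have "3 = card {span1 (arc_vector p0), span1 (arc_vector p1), span1 (arc_vector p2)}"
    using inj_on_eq_iff[OF inj_on_span1_arc_vector] mem by (simp add: p0_def p1_def p2_def)
  also have "\<dots> \<le> card {P \<in> arc25. P \<subseteq> L}"
    by (rule card_mono[OF _ sub]) (simp add: arc25_def)
  finally show ?thesis
    using L card_arc25_on_line_le_3[OF L] by (intro bexI[of _ L]) auto
qed

lemma is_arc_arc25: "is_arc 39 3 arc25"
proof -
  have "arc_vector p \<noteq> zero3" for p
    by (simp add: arc_vector_def zero3_def)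
  then have "arc25 \<subseteq> pg_points"
    unfolding arc25_def pg_points_def by blast
  moreover have "finite arc25"
    by (simp add: arc25_def)
  ultimately show ?thesis
    unfolding is_arc_def
    using card_arc25 card_arc25_on_line_le_3 ex_line_card_arc25_eq_3 by blast
qed

end

lemma le_arc_max:
  assumes "is_arc n r (B :: 'a::{field,finite} vec3 set set)"
  shows "n \<le> arc_max r TYPE('a)"
proof -
  have "bdd_above {n. \<exists>B :: 'a vec3 set set. is_arc n r B}"
  proof (rule bdd_aboveI)
    fix m
    assume "m \<in> {n. \<exists>B :: 'a vec3 set set. is_arc n r B}"
    then obtain B' :: "'a vec3 set set" where "is_arc m r B'"
      by blast
    then show "m \<le> card (UNIV :: 'a vec3 set set)"
      by (auto simp: is_arc_def intro: card_mono)
  qed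
  then show ?thesis
    using assms unfolding arc_max_def by (blast intro: cSup_upper)
qed

theorem mainTheorem11:
  assumes "card (UNIV :: 'a::{field,finite} set) = 25"
  shows "(\<exists>B :: 'a vec3 set set. is_arc 39 3 B) \<and> 39 \<le> arc_max 3 TYPE('a)"
proof -
  obtain w :: 'a where "w * w = 2"
    using ex_sqrt_2_if_card_25[OF assms] by blast
  then interpret gf25 w
    using assms by unfold_locales
  show ?thesis
    using is_arc_arc25 le_arc_max by blast
qed

end
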